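(* Let $A_p\in C[0,\infty)$ be real-valued and consider the Maxwell--Bloch system on $\mathbb X=\mathbb R^2\times S^3$, \[ \dot A=B,\quad \dot B=-\Omega^2A-\sigma B+cj,\quad i\hbar\dot C_1=\hbar\omega_1C_1+iaC_2,\quad i\hbar\dot C_2=\hbar\omega_2C_2-iaC_1, \] with $j=2q\,\mathrm{Im}[\overline{C_1}C_2]$, $a(t)=\frac qc[A(t)+A_p(t)]$, and its reduced dynamics $\dot Y=F(Y,t)$ on $\mathbb Y=\mathbb R^2\times S^2$. Let $T>0$, let $Y(t)=(A(t),B(t),C_*(t))$ be a $T$-periodic solution of the reduced dynamics, and let $\hat Y(t)=(\hat A(t),\hat B(t),\hat C(t))$ be the solution of the Maxwell--Bloch system with any initial state $\hat Y(0)\in\Pi^{-1}(Y(0))$. Then $(\hat A(t),\hat B(t))$, the current $j(t)=2q\,\mathrm{Im}[\overline{\hat C_1(t)}\hat C_2(t)]$ and the population inversion $I(t)=|\hat C_2(t)|^2-|\hat C_1(t)|^2$ are $T$-periodic, while for every $t\ge0$ there is $\theta(t)\in[0,2\pi]$ with $\hat C(t+T)=e^{i\theta(t)}\hat C(t)$.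
   Context: Parameters: $\Omega,\sigma,c,\hbar,p>0$, real $\omega_2>\omega_1$, $\omega=\omega_2-\omega_1$, $q=\omega p$. $S^3=\{C=(C_1,C_2)\in\mathbb C^2:|C_1|^2+|C_2|^2=1\}$. $U(1)$ acts on $\mathbb X$ by $(A,B,C)\mapsto(A,B,e^{i\theta}C)$, commuting with the flow. $\Pi(A,B,C)=(A,B,h(C))$ with $h:S^3\to S^2$ the Hopf fibration identifies $\mathbb X/U(1)$ with $\mathbb Y=\mathbb R^2\times S^2$; the reduced dynamics $\dot Y=F(Y,t)$ is the induced vector field on $\mathbb Y$, so that $\Pi$ maps Maxwell--Bloch solutions to reduced solutions. *)

theory Defs
  imports "HOL-Analysis.Analysis"
begin

type_synonym mb_state = "real \<times> real \<times> (complex \<times> complex)"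
type_synonym red_state = "real \<times> real \<times> (real \<times> real \<times> real)"

definition S3 :: "(complex \<times> complex) set" where
  "S3 = {C. (cmod (fst C))\<^sup>2 + (cmod (snd C))\<^sup>2 = 1}"

definition S2 :: "(real \<times> real \<times> real) set" where
  "S2 = {(x, y, z). x\<^sup>2 + y\<^sup>2 + z\<^sup>2 = 1}"

definition MB_space :: "mb_state set" where
  "MB_space = UNIV \<times> UNIV \<times> S3"

definition red_space :: "red_state set" where
  "red_space = UNIV \<times> UNIV \<times> S2"

definition hopf :: "complex \<times> complex \<Rightarrow> real \<times> real \<times> real" where
  "hopf C = (2 * Re (cnj (fst C) * snd C), 2 * Im (cnj (fst C) * snd C),
             (cmod (fst C))\<^sup>2 - (cmod (snd C))\<^sup>2)"

definition Pi_map :: "mb_state \<Rightarrow> red_state" where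
  "Pi_map X = (fst X, fst (snd X), hopf (snd (snd X)))"

definition MB_field ::
  "real \<Rightarrow> real \<Rightarrow> real \<Rightarrow> real \<Rightarrow> real \<Rightarrow> real \<Rightarrow> real \<Rightarrow> (real \<Rightarrow> real)
   \<Rightarrow> real \<Rightarrow> mb_state \<Rightarrow> mb_state" where
  "MB_field \<Omega> \<sigma> c hbar p \<omega>1 \<omega>2 Ap t X =
    (let q = (\<omega>2 - \<omega>1) * p;
         A = fst X; B = fst (snd X); C1 = fst (snd (snd X)); C2 = snd (snd (snd X));
         j = 2 * q * Im (cnj C1 * C2);
         a = q / c * (A + Ap t)
     in (B,
         - (\<Omega>\<^sup>2) * A - \<sigma> * B + c * j,
         ((complex_of_real (hbar * \<omega>1) * C1 + \<i> * complex_of_real a * C2) / (\<i> * complex_of_real hbar),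
          (complex_of_real (hbar * \<omega>2) * C2 - \<i> * complex_of_real a * C1) / (\<i> * complex_of_real hbar))))"

definition MB_solution ::
  "real \<Rightarrow> real \<Rightarrow> real \<Rightarrow> real \<Rightarrow> real \<Rightarrow> real \<Rightarrow> real \<Rightarrow> (real \<Rightarrow> real)
   \<Rightarrow> (real \<Rightarrow> mb_state) \<Rightarrow> bool" where
  "MB_solution \<Omega> \<sigma> c hbar p \<omega>1 \<omega>2 Ap Xs \<longleftrightarrow>
     (\<forall>t\<ge>0. Xs t \<in> MB_space \<and>
        (Xs has_vector_derivative MB_field \<Omega> \<sigma> c hbar p \<omega>1 \<omega>2 Ap t (Xs t)) (at t within {0..}))"

text \<open>Reduced dynamics Y' = F(Y,t): F is the vector field on Y = R^2 x S^2 induced by Pi,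
  i.e. F(Pi X, t) = D Pi_X (V(X,t)) for every X in the fibre (well defined by U(1)-equivariance).\<close>
definition red_solution ::
  "real \<Rightarrow> real \<Rightarrow> real \<Rightarrow> real \<Rightarrow> real \<Rightarrow> real \<Rightarrow> real \<Rightarrow> (real \<Rightarrow> real)
   \<Rightarrow> (real \<Rightarrow> red_state) \<Rightarrow> bool" where
  "red_solution \<Omega> \<sigma> c hbar p \<omega>1 \<omega>2 Ap Ys \<longleftrightarrow>
     (\<forall>t\<ge>0. Ys t \<in> red_space \<and>
        (\<forall>X\<in>MB_space. Pi_map X = Ys t \<longrightarrow>
           (Ys has_vector_derivative
              frechet_derivative Pi_map (at X) (MB_field \<Omega> \<sigma> c hbar p \<omega>1 \<omega>2 Ap t X))
           (at t within {0..})))"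

end

theory Submission
  imports Defs
begin

text \<open>Both \<open>\<Pi>(X(t))\<close> and \<open>Y(t)\<close> solve the reduced equation \<open>Y' = F(Y, t)\<close> with the
  same initial value. \<open>F\<close> is not Lipschitz, since its Bloch part rotates the \<open>(x, z)\<close>-plane of
  \<open>S\<^sup>2\<close> at the unbounded rate \<open>2q(A + A\<^sub>p)/(c hbar)\<close>; but a rotation is skew and drops out
  of \<open>\<langle>Y\<^sub>1 - Y\<^sub>2, F(Y\<^sub>1) - F(Y\<^sub>2)\<rangle>\<close>, leaving a one-sided Lipschitz bound as soon as \<open>Y\<^sub>2\<close>
  lies on \<open>S\<^sup>2\<close>. Gronwall's argument then gives \<open>\<Pi>(X(t)) = Y(t)\<close>, so \<open>\<Pi>(X(t + T)) = \<Pi>(X(t))\<close>.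
  The quantities \<open>A, B, j, I\<close> are functions of \<open>\<Pi>(X)\<close>, and the fibres of the Hopf map are
  \<open>U(1)\<close>-orbits, which yields the phase \<open>\<theta>(t)\<close>. Continuity of \<open>A\<^sub>p\<close> and the signs of
  \<open>\<Omega>, p, \<omega>\<close> only matter for the existence of solutions, which is assumed here.\<close>

lemma unit_complex_eq_exp:
  assumes "cmod u = 1"
  shows "\<exists>\<theta>\<in>{0..2*pi}. u = exp (\<i> * complex_of_real \<theta>)"
  using Arg2pi[of u] assms by (intro bexI[of _ "Arg2pi u"]) (auto simp: is_Arg_def)

lemma mult_le_sum_squares:
  fixes m a b M s :: real
  assumes "\<bar>m\<bar> \<le> M" "a\<^sup>2 + b\<^sup>2 \<le> s"
  shows "m * a * b \<le> M * s"
proof -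
  have "\<bar>a * b\<bar> \<le> (a\<^sup>2 + b\<^sup>2) / 2"
    using zero_le_power2[of "\<bar>a\<bar> - \<bar>b\<bar>"] by (simp add: power2_eq_square algebra_simps abs_mult)
  with assms(2) have "\<bar>a * b\<bar> \<le> s" by simp
  have "m * a * b \<le> \<bar>m\<bar> * \<bar>a * b\<bar>"
    by (metis abs_ge_self abs_mult mult.assoc)
  also have "\<dots> \<le> M * s"
    using assms(1) \<open>\<bar>a * b\<bar> \<le> s\<close> by (intro mult_mono) auto
  finally show ?thesis .
qed

lemma gronwall_vanishing:
  fixes f f' :: "real \<Rightarrow> real"
  assumes deriv: "\<And>s. s \<ge> 0 \<Longrightarrow> (f has_real_derivative f' s) (at s within {0..})"
    and bound: "\<And>s. s \<ge> 0 \<Longrightarrow> f' s \<le> K * f s"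
    and nonneg: "\<And>s. s \<ge> 0 \<Longrightarrow> f s \<ge> 0"
    and "f 0 = 0" "t \<ge> 0"
  shows "f t = 0"
proof -
  define e where "e s = f s * exp (- K * s)" for s
  have "(e has_real_derivative (f' s - K * f s) * exp (- K * s)) (at s within {0..t})"
    if "0 \<le> s" for s
  proof -
    have "(f has_real_derivative f' s) (at s within {0..t})"
      using deriv[OF that] by (rule has_field_derivative_subset) auto
    then show ?thesis
      unfolding e_def by (auto intro!: derivative_eq_intros simp: algebra_simps)
  qed
  then obtain s where "s \<in> {0..t}" and mvt: "e t - e 0 = (t - 0) * ((f' s - K * f s) * exp (- K * s))"
    using mvt_very_simple[OF \<open>t \<ge> 0\<close>, of e "\<lambda>s. (*) ((f' s - K * f s) * exp (- K * s))"]
    by (auto simp: has_field_derivative_def mult.commute)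
  moreover from \<open>s \<in> {0..t}\<close> have "(f' s - K * f s) * exp (- K * s) \<le> 0"
    using bound by (simp add: mult_nonpos_nonneg)
  ultimately have "e t \<le> 0"
    using \<open>t \<ge> 0\<close> \<open>f 0 = 0\<close> by (simp add: e_def mult_nonneg_nonpos)
  then show ?thesis
    using nonneg[OF \<open>t \<ge> 0\<close>] by (simp add: e_def mult_le_0_iff)
qed

lemma one_sided_lipschitz_uniqueness:
  fixes u v :: "real \<Rightarrow> 'a::real_inner"
  assumes u: "\<And>s. s \<ge> 0 \<Longrightarrow> (u has_vector_derivative F s (u s)) (at s within {0..})"
    and v: "\<And>s. s \<ge> 0 \<Longrightarrow> (v has_vector_derivative F s (v s)) (at s within {0..})"
    and lip: "\<And>s. s \<ge> 0 \<Longrightarrow> inner (u s - v s) (F s (u s) - F s (v s)) \<le> K * (norm (u s - v s))\<^sup>2"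
    and "u 0 = v 0" "t \<ge> 0"
  shows "u t = v t"
proof -
  define f where "f s = inner (u s - v s) (u s - v s)" for s
  have "(f has_real_derivative 2 * inner (u s - v s) (F s (u s) - F s (v s))) (at s within {0..})"
    if "s \<ge> 0" for s
  proof -
    have "((\<lambda>s. u s - v s) has_derivative (\<lambda>h. h *\<^sub>R (F s (u s) - F s (v s)))) (at s within {0..})"
      using has_vector_derivative_diff[OF u[OF that] v[OF that]]
      unfolding has_vector_derivative_def .
    from has_derivative_inner[OF this this] show ?thesis
      unfolding f_def has_field_derivative_def
      by (rule has_derivative_eq_rhs) (simp add: fun_eq_iff inner_commute algebra_simps)
  qed
  moreover have "2 * inner (u s - v s) (F s (u s) - F s (v s)) \<le> (2 * K) * f s" if "s \<ge> 0" for s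
    using lip[OF that] by (simp add: f_def power2_norm_eq_inner)
  ultimately have "f t = 0"
    by (rule gronwall_vanishing) (simp_all add: f_def \<open>u 0 = v 0\<close> \<open>t \<ge> 0\<close>)
  then show ?thesis by (simp add: f_def)
qed

lemma hopf_fibre_unit_multiple:
  assumes "C \<in> S3" "C' \<in> S3" "hopf C' = hopf C"
  obtains u where "cmod u = 1" "fst C' = u * fst C" "snd C' = u * snd C"
proof -
  obtain c1 c2 d1 d2 where C: "C = (c1, c2)" and C': "C' = (d1, d2)"
    by (cases C, cases C')
  have norms: "(cmod c1)\<^sup>2 + (cmod c2)\<^sup>2 = 1" "(cmod d1)\<^sup>2 + (cmod d2)\<^sup>2 = 1"
    using assms(1,2) unfolding C C' S3_def by simp_all
  then have sphere: "c1 * cnj c1 + c2 * cnj c2 = 1" "d1 * cnj d1 + d2 * cnj d2 = 1"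
    by (metis complex_norm_square of_real_1 of_real_add)+
  have "(cmod d1)\<^sup>2 - (cmod d2)\<^sup>2 = (cmod c1)\<^sup>2 - (cmod c2)\<^sup>2"
    and prod: "cnj d1 * d2 = cnj c1 * c2"
    using assms(3) unfolding C C' hopf_def by (simp_all add: complex_eq_iff)
  with norms have "(cmod d1)\<^sup>2 = (cmod c1)\<^sup>2" "(cmod d2)\<^sup>2 = (cmod c2)\<^sup>2"
    by linarith+
  then have mod: "d1 * cnj d1 = c1 * cnj c1" "d2 * cnj d2 = c2 * cnj c2"
    by (metis complex_norm_square)+
  \<comment> \<open>the Hermitian product of \<open>C\<close> and \<open>C'\<close>\<close>
  define u where "u = cnj c1 * d1 + cnj c2 * d2"
  have prod': "c1 * cnj c2 = d1 * cnj d2"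
    using arg_cong[OF prod, of cnj] by (simp add: mult.commute)
  have d1: "d1 = u * c1"
  proof -
    have "u * c1 = d1 * (c1 * cnj c1) + (c1 * cnj c2) * d2"
      by (simp add: u_def algebra_simps)
    also have "\<dots> = d1 * (d1 * cnj d1 + d2 * cnj d2)"
      unfolding mod(1)[symmetric] prod' by (simp add: algebra_simps)
    finally show ?thesis using sphere by simp
  qed
  have d2: "d2 = u * c2"
  proof -
    have "u * c2 = (cnj c1 * c2) * d1 + d2 * (c2 * cnj c2)"
      by (simp add: u_def algebra_simps)
    also have "\<dots> = d2 * (d1 * cnj d1 + d2 * cnj d2)"
      unfolding mod(2)[symmetric] prod[symmetric] by (simp add: algebra_simps)
    finally show ?thesis using sphere by simp
  qed
  have "(cmod u)\<^sup>2 * ((cmod c1)\<^sup>2 + (cmod c2)\<^sup>2) = (cmod d1)\<^sup>2 + (cmod d2)\<^sup>2"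
    by (simp add: d1 d2 norm_mult algebra_simps)
  then have "cmod u = 1"
    using norms by (simp add: abs_square_eq_1)
  with d1 d2 show thesis using that C C' by simp
qed

lemma S2_coordinate_bounds:
  assumes "(x, y, z) \<in> S2"
  shows "\<bar>x\<bar> \<le> 1" "\<bar>z\<bar> \<le> 1"
proof -
  have "x\<^sup>2 + y\<^sup>2 + z\<^sup>2 = 1" using assms by (simp add: S2_def)
  then have "x\<^sup>2 \<le> 1" "z\<^sup>2 \<le> 1"
    using zero_le_power2[of x] zero_le_power2[of y] zero_le_power2[of z] by linarith+
  then show "\<bar>x\<bar> \<le> 1" "\<bar>z\<bar> \<le> 1" by (simp_all add: abs_square_le_1)
qed

lemma S2_subset_hopf_image: "S2 \<subseteq> hopf ` S3"
proof
  fix w assume "w \<in> S2"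
  then obtain x y z where w: "w = (x, y, z)" and sphere: "x\<^sup>2 + y\<^sup>2 + z\<^sup>2 = 1"
    by (auto simp: S2_def)
  show "w \<in> hopf ` S3"
  proof (cases "z = -1")
    case True
    with sphere have "x = 0" "y = 0" by simp_all
    with True show ?thesis
      unfolding w by (intro image_eqI[of _ _ "(0, 1)"]) (auto simp: hopf_def S3_def)
  next
    case False
    moreover have "\<bar>z\<bar> \<le> 1"
      using S2_coordinate_bounds \<open>w \<in> S2\<close> unfolding w by blast
    ultimately have "1 + z > 0" by linarith
    define r where "r = sqrt ((1 + z) / 2)"
    have "r > 0" and r2: "r\<^sup>2 = (1 + z) / 2"
      using \<open>1 + z > 0\<close> by (simp_all add: r_def)
    define C where "C = (complex_of_real r, Complex x y / complex_of_real (2 * r))"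
    have prod: "cnj (fst C) * snd C = Complex (x / 2) (y / 2)"
      using \<open>r > 0\<close> by (simp add: C_def complex_eq_iff Re_divide Im_divide power2_eq_square)
    have m1: "(cmod (fst C))\<^sup>2 = (1 + z) / 2"
      using r2 by (simp add: C_def)
    have "(cmod (snd C))\<^sup>2 = (x\<^sup>2 + y\<^sup>2) / (4 * r\<^sup>2)"
      using \<open>r > 0\<close> by (simp add: C_def norm_divide power_divide cmod_power2 power_mult_distrib)
    also have "\<dots> = (1 - z\<^sup>2) / (2 * (1 + z))"
      using sphere r2 by (intro arg_cong2[where f = "(/)"]) simp_all
    also have "\<dots> = (1 - z) / 2"
      using \<open>1 + z > 0\<close> by (simp add: field_simps power2_eq_square)
    finally have m2: "(cmod (snd C))\<^sup>2 = (1 - z) / 2" .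
    have "hopf C = w"
      unfolding hopf_def w prod m1 m2 by (simp add: field_simps)
    moreover have "C \<in> S3"
      using m1 m2 by (simp add: S3_def)
    ultimately show ?thesis by blast
  qed
qed

lemma Pi_map_polynomial:
  "Pi_map = (\<lambda>X. (fst X, fst (snd X),
     2 * Re (cnj (fst (snd (snd X))) * snd (snd (snd X))),
     2 * Im (cnj (fst (snd (snd X))) * snd (snd (snd X))),
     Re (cnj (fst (snd (snd X))) * fst (snd (snd X))) - Re (cnj (snd (snd (snd X))) * snd (snd (snd X)))))"
  by (simp add: fun_eq_iff Pi_map_def hopf_def cmod_power2) (simp add: power2_eq_square)

fun D_Pi :: "mb_state \<Rightarrow> mb_state \<Rightarrow> red_state" where
  "D_Pi (A, B, c1, c2) (dA, dB, d1, d2) =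
     (dA, dB, 2 * Re (cnj c1 * d2 + cnj d1 * c2), 2 * Im (cnj c1 * d2 + cnj d1 * c2),
      2 * Re (cnj c1 * d1) - 2 * Re (cnj c2 * d2))"

lemma has_derivative_Pi_map: "(Pi_map has_derivative D_Pi X) (at X within S)"
proof -
  obtain A B c1 c2 where "X = (A, B, c1, c2)" by (cases X) auto
  then show ?thesis
    unfolding Pi_map_polynomial
    by (auto intro!: derivative_eq_intros simp: fun_eq_iff algebra_simps)
qed

fun red_field ::
  "real \<Rightarrow> real \<Rightarrow> real \<Rightarrow> real \<Rightarrow> real \<Rightarrow> real \<Rightarrow> real \<Rightarrow> (real \<Rightarrow> real)
   \<Rightarrow> real \<Rightarrow> red_state \<Rightarrow> red_state" where
  "red_field \<Omega> \<sigma> c hbar p \<omega>1 \<omega>2 Ap t (A, B, x, y, z) =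
    (let \<omega> = \<omega>2 - \<omega>1; q = \<omega> * p; k = q / (c * hbar) * (A + Ap t)
     in (B, - (\<Omega>\<^sup>2) * A - \<sigma> * B + c * q * y, \<omega> * y - 2 * k * z, - \<omega> * x, 2 * k * x))"

lemma D_Pi_MB_field:
  assumes "c \<noteq> 0" "hbar \<noteq> 0"
  shows "D_Pi X (MB_field \<Omega> \<sigma> c hbar p \<omega>1 \<omega>2 Ap t X) = red_field \<Omega> \<sigma> c hbar p \<omega>1 \<omega>2 Ap t (Pi_map X)"
proof -
  obtain A B a1 b1 a2 b2 where "X = (A, B, Complex a1 b1, Complex a2 b2)"
    by (metis complex.exhaust prod.exhaust)
  with assms show ?thesis
    unfolding MB_field_def Pi_map_polynomial Let_def
    by (simp add: Re_divide Im_divide power2_eq_square) (simp add: field_simps)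
qed

lemma MB_solution_Pi_map_has_vector_derivative:
  assumes "MB_solution \<Omega> \<sigma> c hbar p \<omega>1 \<omega>2 Ap Xh" "c \<noteq> 0" "hbar \<noteq> 0" "t \<ge> 0"
  shows "((\<lambda>s. Pi_map (Xh s)) has_vector_derivative red_field \<Omega> \<sigma> c hbar p \<omega>1 \<omega>2 Ap t (Pi_map (Xh t)))
    (at t within {0..})"
  using vector_derivative_diff_chain_within[OF _ has_derivative_Pi_map] assms
  unfolding MB_solution_def D_Pi_MB_field[OF assms(2,3), symmetric] o_def by blast

lemma red_solution_has_vector_derivative:
  assumes "red_solution \<Omega> \<sigma> c hbar p \<omega>1 \<omega>2 Ap Ys" "c \<noteq> 0" "hbar \<noteq> 0" "t \<ge> 0"
  shows "(Ys has_vector_derivative red_field \<Omega> \<sigma> c hbar p \<omega>1 \<omega>2 Ap t (Ys t)) (at t within {0..})"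
proof -
  have "Ys t \<in> red_space"
    using assms(1,4) unfolding red_solution_def by blast
  then obtain X where "X \<in> MB_space" "Pi_map X = Ys t"
    using S2_subset_hopf_image
    by (auto simp: red_space_def MB_space_def Pi_map_def)
  moreover have "frechet_derivative Pi_map (at X) = D_Pi X"
    using frechet_derivative_at[OF has_derivative_Pi_map] by simp
  ultimately show ?thesis
    using assms(1,4) D_Pi_MB_field[OF assms(2,3)] unfolding red_solution_def by metis
qed

lemma red_field_one_sided_lipschitz:
  assumes "Y' \<in> red_space" "\<sigma> \<ge> 0"
  shows "inner (Y - Y') (red_field \<Omega> \<sigma> c hbar p \<omega>1 \<omega>2 Ap t Y - red_field \<Omega> \<sigma> c hbar p \<omega>1 \<omega>2 Ap t Y')
     \<le> (\<bar>1 - \<Omega>\<^sup>2\<bar> + \<bar>c * ((\<omega>2 - \<omega>1) * p)\<bar> + 4 * \<bar>(\<omega>2 - \<omega>1) * p / (c * hbar)\<bar>)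
        * (norm (Y - Y'))\<^sup>2"
proof -
  obtain A B x y z A' B' x' y' z' where Y: "Y = (A, B, x, y, z)" and Y': "Y' = (A', B', x', y', z')"
    by (metis prod.exhaust)
  have "\<bar>x'\<bar> \<le> 1" "\<bar>z'\<bar> \<le> 1"
    using assms(1) S2_coordinate_bounds unfolding Y' red_space_def by auto
  define q where "q = (\<omega>2 - \<omega>1) * p"
  define \<kappa> where "\<kappa> = q / (c * hbar)"
  define D where "D = (A - A')\<^sup>2 + (B - B')\<^sup>2 + (x - x')\<^sup>2 + (y - y')\<^sup>2 + (z - z')\<^sup>2"
  have "(norm (Y - Y'))\<^sup>2 = D"
    unfolding Y Y' D_def power2_norm_eq_inner by (simp add: power2_eq_square)
  \<comment> \<open>the rotation terms with the unbounded rate \<open>\<kappa> (A + Ap t)\<close> cancel\<close>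
  moreover have "inner (Y - Y') (red_field \<Omega> \<sigma> c hbar p \<omega>1 \<omega>2 Ap t Y - red_field \<Omega> \<sigma> c hbar p \<omega>1 \<omega>2 Ap t Y')
     = (1 - \<Omega>\<^sup>2) * (A - A') * (B - B') - \<sigma> * (B - B')\<^sup>2 + (c * q) * (B - B') * (y - y')
       + (- 2 * \<kappa> * z') * (A - A') * (x - x') + (2 * \<kappa> * x') * (A - A') * (z - z')"
    unfolding Y Y' red_field.simps Let_def q_def[symmetric] \<kappa>_def[symmetric]
    by (simp add: algebra_simps power2_eq_square)
  moreover have "(1 - \<Omega>\<^sup>2) * (A - A') * (B - B') \<le> \<bar>1 - \<Omega>\<^sup>2\<bar> * D"
    "(c * q) * (B - B') * (y - y') \<le> \<bar>c * q\<bar> * D"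
    "(- 2 * \<kappa> * z') * (A - A') * (x - x') \<le> 2 * \<bar>\<kappa>\<bar> * D"
    "(2 * \<kappa> * x') * (A - A') * (z - z') \<le> 2 * \<bar>\<kappa>\<bar> * D"
    using \<open>\<bar>x'\<bar> \<le> 1\<close> \<open>\<bar>z'\<bar> \<le> 1\<close>
    by (intro mult_le_sum_squares; simp add: D_def abs_mult mult_left_le)+
  moreover have "\<sigma> * (B - B')\<^sup>2 \<ge> 0" using assms(2) by simp
  ultimately show ?thesis unfolding q_def[symmetric] \<kappa>_def[symmetric] by (simp add: algebra_simps)
qed

lemma MB_solution_projects_onto_red_solution:
  assumes red: "red_solution \<Omega> \<sigma> c hbar p \<omega>1 \<omega>2 Ap Ys"
    and MB: "MB_solution \<Omega> \<sigma> c hbar p \<omega>1 \<omega>2 Ap Xh"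
    and "Pi_map (Xh 0) = Ys 0" "\<sigma> \<ge> 0" "c \<noteq> 0" "hbar \<noteq> 0" "t \<ge> 0"
  shows "Pi_map (Xh t) = Ys t"
proof -
  have on_S2: "Ys s \<in> red_space" if "s \<ge> 0" for s
    using red that unfolding red_solution_def by blast
  show ?thesis
  proof (rule one_sided_lipschitz_uniqueness[where F = "red_field \<Omega> \<sigma> c hbar p \<omega>1 \<omega>2 Ap"])
  qed (use assms on_S2 MB_solution_Pi_map_has_vector_derivative[OF MB] red_solution_has_vector_derivative[OF red]
      in \<open>auto intro: red_field_one_sided_lipschitz\<close>)
qed

lemma Pi_map_eq_imp_phase_shift:
  assumes "X \<in> MB_space" "X' \<in> MB_space" "Pi_map X' = Pi_map X"
  shows "fst X' = fst X \<and> fst (snd X') = fst (snd X) \<and>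
    2 * q * Im (cnj (fst (snd (snd X'))) * snd (snd (snd X'))) = 2 * q * Im (cnj (fst (snd (snd X))) * snd (snd (snd X))) \<and>
    (cmod (snd (snd (snd X'))))\<^sup>2 - (cmod (fst (snd (snd X'))))\<^sup>2
      = (cmod (snd (snd (snd X))))\<^sup>2 - (cmod (fst (snd (snd X))))\<^sup>2 \<and>
    (\<exists>\<theta>\<in>{0..2*pi}.
       fst (snd (snd X')) = exp (\<i> * complex_of_real \<theta>) * fst (snd (snd X)) \<and>
       snd (snd (snd X')) = exp (\<i> * complex_of_real \<theta>) * snd (snd (snd X)))"
proof -
  have hopf_eq: "hopf (snd (snd X')) = hopf (snd (snd X))"
    using assms(3) by (simp add: Pi_map_def)
  have "snd (snd X) \<in> S3" "snd (snd X') \<in> S3"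
    using assms(1,2) by (auto simp: MB_space_def)
  then obtain u where "cmod u = 1"
    "fst (snd (snd X')) = u * fst (snd (snd X))" "snd (snd (snd X')) = u * snd (snd (snd X))"
    using hopf_fibre_unit_multiple hopf_eq by blast
  moreover have "fst X' = fst X" "fst (snd X') = fst (snd X)"
    using assms(3) by (simp_all add: Pi_map_def)
  moreover have "Im (cnj (fst (snd (snd X'))) * snd (snd (snd X'))) = Im (cnj (fst (snd (snd X))) * snd (snd (snd X)))"
    "(cmod (snd (snd (snd X'))))\<^sup>2 - (cmod (fst (snd (snd X'))))\<^sup>2
      = (cmod (snd (snd (snd X))))\<^sup>2 - (cmod (fst (snd (snd X))))\<^sup>2"
    using hopf_eq by (simp_all add: hopf_def)
  ultimately show ?thesis
    using unit_complex_eq_exp by metis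
qed

theorem lemma3p2:
  fixes \<Omega> \<sigma> c hbar p \<omega>1 \<omega>2 T :: real
    and Ap :: "real \<Rightarrow> real"
    and Ys :: "real \<Rightarrow> red_state"
    and Xh :: "real \<Rightarrow> mb_state"
  assumes "\<Omega> > 0" "\<sigma> > 0" "c > 0" "hbar > 0" "p > 0" "\<omega>2 > \<omega>1"
    and "continuous_on {0..} Ap"
    and "T > 0"
    and "red_solution \<Omega> \<sigma> c hbar p \<omega>1 \<omega>2 Ap Ys"
    and "\<forall>t\<ge>0. Ys (t + T) = Ys t"
    and "MB_solution \<Omega> \<sigma> c hbar p \<omega>1 \<omega>2 Ap Xh"
    and "Pi_map (Xh 0) = Ys 0"
  shows "\<forall>t\<ge>0.
      fst (Xh (t + T)) = fst (Xh t) \<and>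
      fst (snd (Xh (t + T))) = fst (snd (Xh t)) \<and>
      2 * ((\<omega>2 - \<omega>1) * p) * Im (cnj (fst (snd (snd (Xh (t + T))))) * snd (snd (snd (Xh (t + T)))))
        = 2 * ((\<omega>2 - \<omega>1) * p) * Im (cnj (fst (snd (snd (Xh t)))) * snd (snd (snd (Xh t)))) \<and>
      (cmod (snd (snd (snd (Xh (t + T))))))\<^sup>2 - (cmod (fst (snd (snd (Xh (t + T))))))\<^sup>2
        = (cmod (snd (snd (snd (Xh t)))))\<^sup>2 - (cmod (fst (snd (snd (Xh t)))))\<^sup>2 \<and>
      (\<exists>\<theta>\<in>{0..2*pi}.
         fst (snd (snd (Xh (t + T)))) = exp (\<i> * complex_of_real \<theta>) * fst (snd (snd (Xh t))) \<and>
         snd (snd (snd (Xh (t + T)))) = exp (\<i> * complex_of_real \<theta>) * snd (snd (snd (Xh t))))"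
proof (intro allI impI Pi_map_eq_imp_phase_shift)
  fix t :: real assume "t \<ge> 0"
  have on_red_solution: "Pi_map (Xh s) = Ys s" if "s \<ge> 0" for s
    using MB_solution_projects_onto_red_solution[OF assms(9,11,12)] assms(2-4) that by simp
  show "Pi_map (Xh (t + T)) = Pi_map (Xh t)"
    using on_red_solution assms(8,10) \<open>t \<ge> 0\<close> by simp
  show "Xh t \<in> MB_space" "Xh (t + T) \<in> MB_space"
    using assms(8,11) \<open>t \<ge> 0\<close> unfolding MB_solution_def by simp_all
qed

end
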